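(* Let $S(n)=\sum_{i=1}^{n}(-1)^{e(i)}$ for $n\ge1$. Then $$\liminf_{n\to\infty}S(n)=-\infty\qquad\text{and}\qquad\limsup_{n\to\infty}S(n)=+\infty.$$
   Context: The Stern polynomials $B_n(t)\in\mathbb{Z}[t]$ are defined by $B_0(t)=0$, $B_1(t)=1$, and for $n\geq 1$: $B_{2n}(t)=tB_n(t)$, $B_{2n+1}(t)=B_n(t)+B_{n+1}(t)$. For $n\geq1$ let $e(n)=\deg B_n(t)$. *)

theory Defs
  imports "HOL-Computational_Algebra.Polynomial" "HOL-Library.Extended_Real" "HOL-Library.Liminf_Limsup"
begin

function stern_poly :: "nat \<Rightarrow> int poly" where
  "stern_poly n =
     (if n = 0 then 0
      else if n = 1 then 1
      else if even n then monom 1 1 * stern_poly (n div 2)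
      else stern_poly (n div 2) + stern_poly (n div 2 + 1))"
  by pat_completeness auto
termination
  by (relation "measure id") (auto, presburger)

definition stern_e :: "nat \<Rightarrow> nat" where
  "stern_e n = degree (stern_poly n)"

definition stern_S :: "nat \<Rightarrow> int" where
  "stern_S n = (\<Sum>i=1..n. (-1) ^ stern_e i)"

end

theory Submission
  imports Defs
begin

(* 1. The Stern polynomials have nonnegative coefficients and B_n <> 0 for n >= 1, so no
      cancellation of leading terms occurs: e(2n) = e(n) + 1, e(2n+1) = max (e n) (e (n+1)).
      Consequently |e(n+1) - e(n)| <= 1, whence e(4n+1) = e(n) + 1 and e(4n+3) = e(n+1) + 1.
   2. For the sign s(n) = (-1)^e(n) this gives s(2n) = -s(n), s(4n+1) = -s(n),
      s(4n+3) = -s(n+1); summing over blocks of four yields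
      S(4m) + S(2m) + S(m) + S(m-1) = 1 for all m >= 1.
   3. Taking m = 2^k, the numbers b_k = 4 S(2^k) - 1 - 2(-1)^k satisfy the linear recurrence
      b_{k+2} = -b_{k+1} - 2 b_k.  Along every nonzero solution of this recurrence the
      positive definite form Q(x,y) = y^2 + xy + 2x^2 of consecutive terms doubles at each
      step, so the solution is unbounded above and below.
   4. Hence S is unbounded above and below along the subsequence S(2^k), which gives
      liminf S = -infinity and limsup S = +infinity. *)


section \<open>Polynomials with nonnegative coefficients\<close>

definition nonneg_coeffs :: "'a::linordered_idom poly \<Rightarrow> bool" where
  "nonneg_coeffs p \<longleftrightarrow> (\<forall>i. 0 \<le> coeff p i)"

lemma nonneg_coeffs_lead_pos:
  assumes "nonneg_coeffs p" "p \<noteq> 0"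
  shows "0 < lead_coeff p"
  using assms by (metis leading_coeff_0_iff nonneg_coeffs_def order_le_less)

lemma nonneg_coeffs_le_degree_add:
  assumes "nonneg_coeffs p" "nonneg_coeffs q" "p \<noteq> 0"
  shows "p + q \<noteq> 0" and "degree p \<le> degree (p + q)"
proof -
  have "0 < coeff (p + q) (degree p)"
    using nonneg_coeffs_lead_pos[OF assms(1,3)] assms(2)
    by (simp add: nonneg_coeffs_def add_pos_nonneg)
  then show "p + q \<noteq> 0" and "degree p \<le> degree (p + q)"
    by (metis coeff_0 less_irrefl, metis le_degree less_irrefl)
qed

lemma nonneg_coeffs_degree_add:
  assumes "nonneg_coeffs p" "nonneg_coeffs q" "p \<noteq> 0" "q \<noteq> 0"
  shows "degree (p + q) = max (degree p) (degree q)"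
  using nonneg_coeffs_le_degree_add(2)[OF assms(1,2,3)]
    nonneg_coeffs_le_degree_add(2)[OF assms(2,1,4)] degree_add_le_max[of p q]
  by (simp add: add.commute)


lemma stern_poly_0: "stern_poly 0 = 0"
  by (subst stern_poly.simps) simp

lemma stern_poly_1: "stern_poly (Suc 0) = 1"
  by (subst stern_poly.simps) simp

lemma stern_poly_even: "n \<ge> 1 \<Longrightarrow> stern_poly (2 * n) = monom 1 1 * stern_poly n"
  by (subst stern_poly.simps) simp

lemma stern_poly_odd: "n \<ge> 1 \<Longrightarrow> stern_poly (2 * n + 1) = stern_poly n + stern_poly (n + 1)"
  by (subst stern_poly.simps) simp

declare stern_poly.simps [simp del]

lemma binary_cases [case_names zero one even odd]:
  fixes n :: nat
  obtains "n = 0" | "n = 1" | m where "m \<ge> 1" "n = 2 * m" | m where "m \<ge> 1" "n = 2 * m + 1"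
  by (metis evenE oddE One_nat_def less_one mult_is_0 nat_less_le not_less
      Suc_eq_plus1 add_0 mult_1_right)

(* Both facts are proved together since the odd case of nonvanishing needs nonnegativity. *)
lemma stern_poly_nonneg_nonzero:
  "nonneg_coeffs (stern_poly n) \<and> (n \<ge> 1 \<longrightarrow> stern_poly n \<noteq> 0)"
proof (induction n rule: less_induct)
  case (less n)
  show ?case
  proof (cases n rule: binary_cases)
    case zero then show ?thesis by (simp add: stern_poly_0 nonneg_coeffs_def)
  next
    case one then show ?thesis by (simp add: stern_poly_1 nonneg_coeffs_def)
  next
    case (even m)
    then have IH: "nonneg_coeffs (stern_poly m)" "stern_poly m \<noteq> 0"
      using less.IH[of m] by auto
    have "coeff (stern_poly n) i \<ge> 0" for i
      using IH even by (cases i) (auto simp: stern_poly_even coeff_monom_mult nonneg_coeffs_def)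
    then show ?thesis
      using IH even by (auto simp: stern_poly_even monom_eq_0_iff nonneg_coeffs_def)
  next
    case (odd m)
    then have IH: "nonneg_coeffs (stern_poly m)" "stern_poly m \<noteq> 0"
      "nonneg_coeffs (stern_poly (m + 1))"
      using less.IH[of m] less.IH[of "m + 1"] by auto
    have "stern_poly n = stern_poly m + stern_poly (m + 1)"
      using odd stern_poly_odd by simp
    then show ?thesis
      using nonneg_coeffs_le_degree_add(1)[OF IH(1,3,2)] IH(1,3)
      by (simp add: nonneg_coeffs_def)
  qed
qed


section \<open>The degree sequence e(n)\<close>

lemma stern_e_1: "stern_e (Suc 0) = 0"
  by (simp add: stern_e_def stern_poly_1)

(* No cancellation: multiplication by t and sums of nonzero nonnegative polynomials. *)
lemma stern_e_even: "n \<ge> 1 \<Longrightarrow> stern_e (2 * n) = stern_e n + 1"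
  using stern_poly_nonneg_nonzero[of n]
  by (simp add: stern_e_def stern_poly_even degree_mult_eq degree_monom_eq)

lemma stern_e_odd: "n \<ge> 1 \<Longrightarrow> stern_e (2 * n + 1) = max (stern_e n) (stern_e (n + 1))"
  using stern_poly_nonneg_nonzero[of n] stern_poly_nonneg_nonzero[of "n + 1"] stern_poly_odd[of n]
  by (simp add: stern_e_def nonneg_coeffs_degree_add)

lemma stern_e_2: "stern_e 2 = 1"
  using stern_e_even[of 1] stern_e_1 by simp

lemma stern_e_Lipschitz: "stern_e (n + 1) \<le> stern_e n + 1 \<and> stern_e n \<le> stern_e (n + 1) + 1"
proof (induction n rule: less_induct)
  case (less n)
  show ?case
  proof (cases n rule: binary_cases)
    case zero then show ?thesis by (simp add: stern_e_def stern_poly_0 stern_poly_1)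
  next
    case one then show ?thesis using stern_e_1 stern_e_2 by (simp add: numeral_2_eq_2)
  next
    case (even m)
    then show ?thesis
      using less.IH[of m] stern_e_even[of m] stern_e_odd[of m] by auto
  next
    case (odd m)
    then show ?thesis
      using less.IH[of m] stern_e_odd[of m] stern_e_even[of "m + 1"] by auto
  qed
qed

(* Two steps of the recurrence, using the Lipschitz bound to resolve the maxima. *)
lemma stern_e_4n1: "n \<ge> 1 \<Longrightarrow> stern_e (4 * n + 1) = stern_e n + 1"
  using stern_e_odd[of "2 * n"] stern_e_even[of n] stern_e_odd[of n] stern_e_Lipschitz[of n]
  by (simp add: mult.assoc[symmetric])

lemma stern_e_4n3: "stern_e (4 * n + 3) = stern_e (n + 1) + 1"
proof -
  have eq: "4 * n + 3 = 2 * (2 * n + 1) + 1" "2 * n + 1 + 1 = 2 * (n + 1)" by simp_all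
  have "stern_e (2 * (2 * n + 1) + 1) = max (stern_e (2 * n + 1)) (stern_e (2 * n + 1 + 1))"
    by (rule stern_e_odd) simp
  then have top: "stern_e (4 * n + 3) = max (stern_e (2 * n + 1)) (stern_e (2 * (n + 1)))"
    by (simp only: eq)
  have "stern_e (2 * (n + 1)) = stern_e (n + 1) + 1"
    by (rule stern_e_even) simp
  moreover have "stern_e (2 * n + 1) \<le> stern_e (n + 1) + 1"
  proof (cases "n = 0")
    case True then show ?thesis by (simp add: stern_e_1)
  next
    case False then show ?thesis using stern_e_odd[of n] stern_e_Lipschitz[of n] by simp
  qed
  ultimately show ?thesis
    unfolding top by simp
qed

lemma stern_e_pow2: "stern_e (2 ^ k) = k"
  by (induction k) (simp_all add: stern_e_1 stern_e_even)


section \<open>Signs and the block identity for the partial sums\<close>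

definition stern_sign :: "nat \<Rightarrow> int" where
  "stern_sign n = (-1) ^ stern_e n"

lemma stern_sign_even: "n \<ge> 1 \<Longrightarrow> stern_sign (2 * n) = - stern_sign n"
  unfolding stern_sign_def by (simp add: stern_e_even)

lemma stern_sign_4n1: "n \<ge> 1 \<Longrightarrow> stern_sign (4 * n + 1) = - stern_sign n"
  unfolding stern_sign_def by (subst stern_e_4n1) simp_all

lemma stern_sign_4n3: "stern_sign (4 * n + 3) = - stern_sign (n + 1)"
  unfolding stern_sign_def stern_e_4n3 by simp

lemma stern_S_0: "stern_S 0 = 0"
  by (simp add: stern_S_def)

lemma stern_S_add1: "stern_S (n + 1) = stern_S n + stern_sign (n + 1)"
  by (simp add: stern_S_def stern_sign_def)

lemma stern_S_add2: "stern_S (n + 2) = stern_S n + stern_sign (n + 1) + stern_sign (n + 2)"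
  using stern_S_add1[of n] stern_S_add1[of "n + 1"] by (simp add: numeral_eq_Suc)

lemma stern_S_add4:
  "stern_S (n + 4) = stern_S n + stern_sign (n + 1) + stern_sign (n + 2) + stern_sign (n + 3)
     + stern_sign (n + 4)"
  using stern_S_add2[of n] stern_S_add2[of "n + 2"] by (simp add: numeral_eq_Suc)

lemma stern_S_block_step:
  assumes "m \<ge> 1"
  shows "stern_S (4 * m + 4) = stern_S (4 * m) - stern_sign m - stern_sign (2 * m + 1)
           - stern_sign (m + 1) - stern_sign (2 * m + 2)"
proof -
  have eq: "2 * (2 * m + 1) = 4 * m + 2" "2 * (2 * m + 2) = 4 * m + 4" by simp_all
  have "stern_sign (2 * (2 * m + 1)) = - stern_sign (2 * m + 1)"
    by (rule stern_sign_even) simp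
  then have sign_4m2: "stern_sign (4 * m + 2) = - stern_sign (2 * m + 1)"
    by (simp only: eq)
  have "stern_sign (2 * (2 * m + 2)) = - stern_sign (2 * m + 2)"
    by (rule stern_sign_even) simp
  then have sign_4m4: "stern_sign (4 * m + 4) = - stern_sign (2 * m + 2)"
    by (simp only: eq)
  show ?thesis
    using stern_S_add4[of "4 * m"] stern_sign_4n1[OF assms] sign_4m2 stern_sign_4n3[of m] sign_4m4
    by simp
qed

lemma stern_S_block:
  "stern_S (4 * (k + 1)) + stern_S (2 * (k + 1)) + stern_S (k + 1) + stern_S k = 1"
proof (induction k)
  case 0
  have e34: "stern_e 3 = 1" "stern_e 4 = 2"
    using stern_e_4n3[of 0] stern_e_even[of 2] stern_e_1 stern_e_2 by simp_all
  have "stern_S 1 = 1" "stern_S 2 = 0"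
    using stern_S_add1[of 0] stern_S_add2[of 0] stern_e_1 stern_e_2
    by (simp_all add: stern_S_0 stern_sign_def numeral_2_eq_2)
  moreover have "stern_S 4 = 0"
    using stern_S_add4[of 0] stern_e_1 stern_e_2 e34 by (simp add: stern_S_0 stern_sign_def numeral_2_eq_2)
  ultimately show ?case by (simp add: stern_S_0)
next
  case (Suc k)
  let ?m = "k + 1"
  have "4 * (Suc k + 1) = 4 * ?m + 4" "2 * (Suc k + 1) = 2 * ?m + 2" "Suc k = ?m" by simp_all
  moreover have "stern_S (4 * ?m + 4) = stern_S (4 * ?m) - stern_sign ?m - stern_sign (2 * ?m + 1)
      - stern_sign (?m + 1) - stern_sign (2 * ?m + 2)"
    by (rule stern_S_block_step) simp
  moreover have "stern_S (2 * ?m + 2) = stern_S (2 * ?m) + stern_sign (2 * ?m + 1)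
      + stern_sign (2 * ?m + 2)"
    by (rule stern_S_add2)
  moreover have "stern_S (?m + 1) = stern_S ?m + stern_sign (?m + 1)" "stern_S ?m = stern_S k + stern_sign ?m"
    by (rule stern_S_add1)+
  ultimately show ?case
    using Suc.IH by (simp only:) \<comment> \<open>rewriting with these equations leaves a linear identity\<close>
qed

(* The block identity at m = 2^k, rewritten as a recurrence for a_k = S(2^k). *)
lemma stern_S_pow2_rec:
  "stern_S (2 ^ (k + 2)) = - stern_S (2 ^ (k + 1)) - 2 * stern_S (2 ^ k) + (-1) ^ k + 1"
proof -
  define j where "j = 2 ^ k - (1::nat)"
  have j: "j + 1 = 2 ^ k" unfolding j_def by simp
  have "stern_S (2 ^ k) = stern_S j + (-1) ^ k"
    using stern_S_add1[of j] unfolding j by (simp add: stern_sign_def stern_e_pow2)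
  moreover have "stern_S (2 ^ (k + 2)) + stern_S (2 ^ (k + 1)) + stern_S (2 ^ k) + stern_S j = 1"
    using stern_S_block[of j] unfolding j by (simp add: power_add mult.commute)
  ultimately show ?thesis by linarith
qed


section \<open>Solutions of the recurrence b(k+2) = -b(k+1) - 2 b(k) are unbounded\<close>

(* The form invariant under the recurrence up to the factor 2. *)
definition rec_form :: "int \<Rightarrow> int \<Rightarrow> int" where
  "rec_form x y = y ^ 2 + y * x + 2 * x ^ 2"

(* Q is positive definite: 4 Q(x,y) = (2y + x)^2 + 7 x^2. *)
lemma rec_form_pos: "(x, y) \<noteq> (0, 0) \<Longrightarrow> 0 < rec_form x y"
proof -
  assume nonzero: "(x, y) \<noteq> (0, 0)"
  have "0 < (2 * y + x) ^ 2 + 7 * x ^ 2"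
  proof (cases "x = 0")
    case True then show ?thesis using nonzero by simp
  next
    case False then show ?thesis by (simp add: add_nonneg_pos)
  qed
  then show ?thesis
    unfolding rec_form_def by (simp add: power2_eq_square algebra_simps)
qed

lemma rec_form_step: "rec_form y (- y - 2 * x) = 2 * rec_form x y"
  by (simp add: rec_form_def power2_eq_square algebra_simps)

(* If three consecutive terms x, y, -y-2x all exceed m, then m < 0 and the form of (x, y)
   is below 14 m^2: all terms are bounded in absolute value by a multiple of |m|. *)
lemma rec_form_bound:
  fixes x y m :: int
  assumes "m < x" "m < y" "m < - y - 2 * x"
  shows "rec_form x y < 14 * m ^ 2"
proof -
  have x: "\<bar>x\<bar> < - m" and y: "\<bar>y\<bar> < - 3 * m" using assms by linarith+
  have "x ^ 2 < m ^ 2" "y ^ 2 < 9 * m ^ 2"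
    using power_strict_mono[of "\<bar>x\<bar>" "- m" 2] power_strict_mono[of "\<bar>y\<bar>" "- 3 * m" 2] x y
    by (simp_all add: power_mult_distrib)
  moreover have "\<bar>y * x\<bar> \<le> 3 * m ^ 2"
    using mult_mono[of "\<bar>y\<bar>" "- 3 * m" "\<bar>x\<bar>" "- m"] x y
    by (simp add: abs_mult power2_eq_square)
  ultimately show ?thesis
    unfolding rec_form_def by linarith
qed

(* Q(b_k, b_{k+1}) = 2^k Q(b_0, b_1) grows without bound, which is incompatible with three
   consecutive terms staying above a fixed bound. *)
lemma recurrence_unbounded_below:
  fixes b :: "nat \<Rightarrow> int"
  assumes rec: "\<And>k. b (k + 2) = - b (k + 1) - 2 * b k"
    and nonzero: "(b 0, b 1) \<noteq> (0, 0)"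
  shows "\<exists>j\<ge>N. b j \<le> M"
proof (rule ccontr)
  assume "\<not> ?thesis"
  then have above: "\<And>j. j \<ge> N \<Longrightarrow> M < b j" by (meson not_le)
  have form: "rec_form (b k) (b (k + 1)) = 2 ^ k * rec_form (b 0) (b 1)" for k
  proof (induction k)
    case (Suc k)
    have "rec_form (b (k + 1)) (b (k + 2)) = 2 * rec_form (b k) (b (k + 1))"
      unfolding rec by (rule rec_form_step)
    then show ?case using Suc.IH by simp
  qed simp
  define k where "k = N + nat (14 * M ^ 2)"
  have "14 * M ^ 2 \<le> int k" unfolding k_def by simp
  also have "\<dots> < 2 ^ k" using less_exp[of k] by (metis of_nat_less_iff of_nat_numeral of_nat_power)
  also have "\<dots> \<le> rec_form (b k) (b (k + 1))"
    unfolding form using rec_form_pos[OF nonzero] by simp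
  also have "\<dots> < 14 * M ^ 2"
    using above[of k] above[of "k + 1"] above[of "k + 2"] rec[of k] unfolding k_def
    by (intro rec_form_bound) auto
  finally show False .
qed

(* The recurrence is linear, so the negated sequence is again a nonzero solution. *)
lemma recurrence_unbounded_above:
  fixes b :: "nat \<Rightarrow> int"
  assumes "\<And>k. b (k + 2) = - b (k + 1) - 2 * b k" and "(b 0, b 1) \<noteq> (0, 0)"
  shows "\<exists>j\<ge>N. M \<le> b j"
  using recurrence_unbounded_below[of "\<lambda>k. - b k" N "- M"] assms by simp


(* b_k = 4 S(2^k) - 1 - 2(-1)^k solves the recurrence with b_0 = 1, and 4 S(2^k) = b_k + O(1). *)
lemma stern_S_unbounded: "(\<exists>n\<ge>N. stern_S n \<le> M) \<and> (\<exists>n\<ge>N. M \<le> stern_S n)"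
proof -
  define b where "b k = 4 * stern_S (2 ^ k) - 1 - 2 * (-1) ^ k" for k
  have rec: "b (k + 2) = - b (k + 1) - 2 * b k" for k
    unfolding b_def using stern_S_pow2_rec[of k] by simp
  have "b 0 = 1"
    using stern_S_add1[of 0] unfolding b_def by (simp add: stern_S_0 stern_sign_def stern_e_1)
  then have nonzero: "(b 0, b 1) \<noteq> (0, 0)" by simp
  have b_bounds: "4 * stern_S (2 ^ k) \<le> b k + 3" "b k - 3 \<le> 4 * stern_S (2 ^ k)" for k
    unfolding b_def by (cases "even k"; simp)+
  obtain j where j: "j \<ge> N" "b j \<le> 4 * M - 3"
    using recurrence_unbounded_below[OF rec nonzero] by blast
  obtain j' where j': "j' \<ge> N" "4 * M + 3 \<le> b j'"
    using recurrence_unbounded_above[OF rec nonzero] by blast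
  have "N \<le> 2 ^ j" "N \<le> 2 ^ j'"
    using j(1) j'(1) less_exp[of j] less_exp[of j'] by linarith+
  moreover have "stern_S (2 ^ j) \<le> M" "M \<le> stern_S (2 ^ j')"
    using j(2) j'(2) b_bounds[of j] b_bounds[of j'] by linarith+
  ultimately show ?thesis by blast
qed


section \<open>From unboundedness to liminf and limsup\<close>

lemma liminf_eq_MInfty_if_unbounded_below:
  fixes x :: "nat \<Rightarrow> real"
  assumes "\<And>B N. \<exists>n\<ge>N. x n \<le> B"
  shows "liminf (\<lambda>n. ereal (x n)) = -\<infinity>"
proof (rule ereal_bot)
  fix B
  show "liminf (\<lambda>n. ereal (x n)) \<le> ereal B"
  proof (rule Liminf_least)
    fix P assume "eventually P sequentially"
    then obtain N where N: "\<And>n. n \<ge> N \<Longrightarrow> P n" by (auto simp: eventually_sequentially)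
    obtain n where n: "n \<ge> N" "x n \<le> B" using assms by blast
    have "(INF i\<in>Collect P. ereal (x i)) \<le> ereal (x n)"
      using N n(1) by (intro INF_lower) auto
    also have "\<dots> \<le> ereal B" using n(2) by simp
    finally show "(INF i\<in>Collect P. ereal (x i)) \<le> ereal B" .
  qed
qed

(* Dual statement, via limsup x = - liminf (- x). *)
lemma limsup_eq_PInfty_if_unbounded_above:
  fixes x :: "nat \<Rightarrow> real"
  assumes "\<And>B N. \<exists>n\<ge>N. B \<le> x n"
  shows "limsup (\<lambda>n. ereal (x n)) = \<infinity>"
proof -
  have "liminf (\<lambda>n. ereal (- x n)) = -\<infinity>"
    using assms by (intro liminf_eq_MInfty_if_unbounded_below) (meson minus_le_iff)
  then have "- limsup (\<lambda>n. ereal (x n)) = -\<infinity>"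
    using ereal_Liminf_uminus[of sequentially "\<lambda>n. ereal (x n)"] by simp
  then show ?thesis by simp
qed


theorem mainTheorem16:
  shows "liminf (\<lambda>n. ereal (real_of_int (stern_S n))) = -\<infinity>
       \<and> limsup (\<lambda>n. ereal (real_of_int (stern_S n))) = \<infinity>"
proof
  have below: "\<exists>n\<ge>N. real_of_int (stern_S n) \<le> B" for B N
    using stern_S_unbounded[of N "\<lfloor>B\<rfloor>"] by (meson le_floor_iff)
  have above: "\<exists>n\<ge>N. B \<le> real_of_int (stern_S n)" for B N
    using stern_S_unbounded[of N "\<lceil>B\<rceil>"] by (meson ceiling_le_iff)
  show "liminf (\<lambda>n. ereal (real_of_int (stern_S n))) = -\<infinity>"
    using below by (rule liminf_eq_MInfty_if_unbounded_below)
  show "limsup (\<lambda>n. ereal (real_of_int (stern_S n))) = \<infinity>"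
    using above by (rule limsup_eq_PInfty_if_unbounded_above)
qed

end
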